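(* Let $\mu,\delta,\rho>0$ and $0<\beta_0<\mu$. For a parameter $b>0$ consider the system \[ \dot P=P\big[(b-\mu)-2bP+(\delta-b)A\big],\qquad \dot A=-(2\delta P+\rho)A \] on $\mathcal F=\{(P,A): P\ge0,\ A\ge0,\ 2P+A\le1\}$, with centrist share $C=1-2P-A$. Let $t_1<\dots<t_n$ be shock times with state components $\Delta_1,\dots,\Delta_n\in[0,1]$ and structural components $\Delta\beta_1,\dots,\Delta\beta_n\ge0$; at $t_k$ the state jumps by $P\mapsto P$, $C\mapsto(1-\Delta_k)C$, $A\mapsto A+\Delta_kC$, and the parameter becomes $B_k=\beta_0+\sum_{j=1}^k\Delta\beta_j$. Assume $P(t_k^+)>0$ for every $k$. Let $C_k^\infty$ denote $\lim_{t\to\infty}C(t)$ for the solution of the system with $b=B_k$ started from the post-shock state at $t_k^+$ (i.e. without further shocks), and let $k^*$ be the first index with $B_{k^*}>\mu$. Then: (i) For all $k<k^*$, $C_k^\infty=1$. If in addition $\delta>B_k$, then the near-centrist surge criterion for the $k$-th shock is $\Delta_k>\Delta_c^{(k)}:=\frac{\mu-B_k}{\delta-B_k}$, in the sense that $\lim_{\varepsilon\to0^+}(\dot P/P)$ at $(P,A)=(\varepsilon,\Delta_k)$ under $b=B_k$ is positive if and only if $\Delta_k>\Delta_c^{(k)}$. (ii) $C_{k^*}^\infty=\mu/B_{k^*}<1$. (iii) For every $k>k^*$, $C_k^\infty=\mu/B_k\le C_{k-1}^\infty$, with strict inequality if and only if $\Delta\beta_k>0$. (iv) $k^*=\min\{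k:\sum_{j=1}^k\Delta\beta_j>\mu-\beta_0\}$.
   Context: Symmetric reduction ($L=R=P$) of a four-group voter model with disengaged share $A$; $b$ is the combined recruitment/reactive-polarisation rate. *)

theory Defs
  imports "HOL-Analysis.Analysis"
begin

definition fP :: "real \<Rightarrow> real \<Rightarrow> real \<Rightarrow> real \<Rightarrow> real \<Rightarrow> real" where
  "fP mu delta b P A = P * ((b - mu) - 2 * b * P + (delta - b) * A)"

definition fA :: "real \<Rightarrow> real \<Rightarrow> real \<Rightarrow> real \<Rightarrow> real" where
  "fA delta rho P A = - (2 * delta * P + rho) * A"

definition in_F :: "real \<Rightarrow> real \<Rightarrow> bool" where
  "in_F P A \<longleftrightarrow> P \<ge> 0 \<and> A \<ge> 0 \<and> 2 * P + A \<le> 1"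

definition is_sol ::
  "real \<Rightarrow> real \<Rightarrow> real \<Rightarrow> real \<Rightarrow> real \<Rightarrow> real \<Rightarrow> real
     \<Rightarrow> (real \<Rightarrow> real) \<Rightarrow> (real \<Rightarrow> real) \<Rightarrow> bool" where
  "is_sol mu delta rho b t0 P0 A0 p a \<longleftrightarrow>
     p t0 = P0 \<and> a t0 = A0 \<and>
     (\<forall>t\<ge>t0. (p has_real_derivative fP mu delta b (p t) (a t)) (at t within {t0..}) \<and>
              (a has_real_derivative fA delta rho (p t) (a t)) (at t within {t0..}))"

definition Cinf_is ::
  "real \<Rightarrow> real \<Rightarrow> real \<Rightarrow> real \<Rightarrow> real \<Rightarrow> real \<Rightarrow> real \<Rightarrow> real \<Rightarrow> bool" where
  "Cinf_is mu delta rho b t0 P0 A0 L \<longleftrightarrow>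
     (\<exists>p a. is_sol mu delta rho b t0 P0 A0 p a) \<and>
     (\<forall>p a. is_sol mu delta rho b t0 P0 A0 p a \<longrightarrow>
        ((\<lambda>t. 1 - 2 * p t - a t) \<longlongrightarrow> L) at_top)"

end

(* Along every solution A' <= - rho A, so the disengaged share A dies out; afterwards
   (ln P)' = (b - mu) - 2 b P + (delta - b) A stays within any eps of (b - mu) - 2 b P.
   Comparing ln P with constants therefore drives P to max 0 ((b - mu) / (2 b)), so that
   C = 1 - 2 P - A tends to min 1 (mu / b): to 1 below the threshold b = mu and to mu / b above it.
   Solutions exist for all forward time because the vector field clamped to the unit square is
   globally Lipschitz (so Picard iteration converges) and F is invariant under the clamped flow,
   where the clamping is inactive. The statements about successive shocks then only use that
   B k = beta0 + (sum of dbeta j for j = 1..k) is nondecreasing in k. *)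

theory Submission
  imports Defs
begin

section \<open>Scalar differential inequalities\<close>

lemma deriv_nonneg_imp_le:
  fixes f :: "real \<Rightarrow> real"
  assumes deriv: "\<And>t. T \<le> t \<Longrightarrow> (f has_real_derivative f' t) (at t within {T..})"
    and "T \<le> s" "s \<le> u" and nonneg: "\<And>t. s < t \<Longrightarrow> t < u \<Longrightarrow> 0 \<le> f' t"
  shows "f s \<le> f u"
proof (rule DERIV_nonneg_imp_increasing_open[OF \<open>s \<le> u\<close>])
  fix x assume "s < x" "x < u"
  then have "at x within {T..} = at x"
    using \<open>T \<le> s\<close> by (intro at_within_interior) auto
  then show "\<exists>y. DERIV f x :> y \<and> 0 \<le> y"
    using deriv[of x] nonneg[of x] \<open>T \<le> s\<close> \<open>s < x\<close> \<open>x < u\<close> by auto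
next
  have "continuous_on {T..} f" using deriv by (rule DERIV_continuous_on) simp
  then show "continuous_on {s..u} f"
    by (rule continuous_on_subset) (use \<open>T \<le> s\<close> in auto)
qed

lemma nonneg_barrier:
  fixes f :: "real \<Rightarrow> real"
  assumes deriv: "\<And>t. T \<le> t \<Longrightarrow> (f has_real_derivative f' t) (at t within {T..})"
    and init: "0 \<le> f T" and barrier: "\<And>t. T < t \<Longrightarrow> f t < 0 \<Longrightarrow> 0 \<le> f' t"
    and "T \<le> t"
  shows "0 \<le> f t"
proof (rule ccontr)
  assume "\<not> 0 \<le> f t"
  then have ft: "f t < 0" by simp
  define S where "S = {T..t} \<inter> f -` {0..}"
  have "continuous_on {T..} f" using deriv by (rule DERIV_continuous_on) simp
  then have "continuous_on {T..t} f" by (rule continuous_on_subset) auto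
  then have "closed S"
    unfolding S_def by (rule continuous_closed_preimage) auto
  moreover have "T \<in> S" "bdd_above S"
    using init \<open>T \<le> t\<close> by (auto simp: S_def intro: bdd_aboveI[of _ t])
  ultimately have "Sup S \<in> S"
    using closed_contains_Sup by blast
  then have s: "T \<le> Sup S" "Sup S \<le> t" "0 \<le> f (Sup S)" by (auto simp: S_def)
  \<comment> \<open>beyond the last point of {T..t} where f is nonnegative, f is negative, hence nondecreasing\<close>
  have neg: "f u < 0" if "Sup S < u" "u \<le> t" for u
    using that s cSup_upper[OF _ \<open>bdd_above S\<close>, of u] by (force simp: S_def)
  have "f (Sup S) \<le> f t"
    by (rule deriv_nonneg_imp_le[OF deriv s(1,2)]) (use neg barrier s in auto)
  with s ft show False by simp
qed

lemma eventually_nonneg_if_pushed_up: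
  fixes f :: "real \<Rightarrow> real"
  assumes deriv: "\<And>t. T \<le> t \<Longrightarrow> (f has_real_derivative f' t) (at t within {T..})"
    and "0 < r" and push: "\<forall>\<^sub>F t in at_top. f t < 0 \<longrightarrow> r \<le> f' t"
  shows "\<forall>\<^sub>F t in at_top. 0 \<le> f t"
proof -
  obtain T1 where T1: "\<And>t. T1 \<le> t \<Longrightarrow> f t < 0 \<Longrightarrow> r \<le> f' t"
    using push by (auto simp: eventually_at_top_linorder)
  define T2 where "T2 = max T T1"
  have deriv2: "(f has_real_derivative f' t) (at t within {T2..})" if "T2 \<le> t" for t
    using deriv[of t] that by (auto simp: T2_def intro: DERIV_subset)
  have "\<exists>T'\<ge>T2. 0 \<le> f T'"
  proof (rule ccontr)
    assume "\<not> ?thesis"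
    then have neg: "\<And>t. T2 \<le> t \<Longrightarrow> f t < 0" by force
    define T' where "T' = T2 - f T2 / r + 1"
    have "T2 \<le> T'" using neg[of T2] \<open>0 < r\<close> by (simp add: T'_def)
    \<comment> \<open>T' is chosen so that f T2 + r * (T' - T2) = r\<close>
    have "(\<lambda>t. f t - r * t) T2 \<le> (\<lambda>t. f t - r * t) T'"
    proof (rule deriv_nonneg_imp_le[OF _ order.refl \<open>T2 \<le> T'\<close>])
      show "((\<lambda>t. f t - r * t) has_real_derivative f' t - r) (at t within {T2..})" if "T2 \<le> t" for t
        using deriv2[OF that] by (auto intro!: derivative_eq_intros)
    qed (use T1 neg in \<open>force simp: T2_def\<close>)
    then have "r \<le> f T'" using \<open>0 < r\<close> by (simp add: T'_def field_simps)
    with neg[OF \<open>T2 \<le> T'\<close>] \<open>0 < r\<close> show False by simp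
  qed
  then obtain T' where T': "T2 \<le> T'" "0 \<le> f T'" by blast
  have "0 \<le> f t" if "T' \<le> t" for t
  proof (rule nonneg_barrier[of T' f f' t])
    show "(f has_real_derivative f' u) (at u within {T'..})" if "T' \<le> u" for u
      using deriv2[of u] that T' by (auto intro: DERIV_subset)
    show "0 \<le> f' u" if "T' < u" "f u < 0" for u
      using T1[of u] that T' \<open>0 < r\<close> by (simp add: T2_def)
  qed (use T' that in simp_all)
  then show ?thesis unfolding eventually_at_top_linorder by blast
qed

lemma linear_ode_solution:
  fixes y h :: "real \<Rightarrow> real"
  assumes deriv: "\<And>t. t0 \<le> t \<Longrightarrow> (y has_real_derivative h t * y t) (at t within {t0..})"
    and "continuous_on {t0..} h" and "t0 \<le> t"
  shows "y t = y t0 * exp (integral {t0..t} h)"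
proof -
  define H where "H u = integral {t0..u} h" for u
  have "continuous_on {t0..t} h"
    using assms(2) by (rule continuous_on_subset) auto
  then have dH: "(H has_real_derivative h u) (at u within {t0..t})" if "u \<in> {t0..t}" for u
    unfolding H_def using that by (rule integral_has_real_derivative)
  have "((\<lambda>u. y u * exp (- H u)) has_real_derivative 0) (at u within {t0..t})"
    if "u \<in> {t0..t}" for u
    using that by (auto intro!: derivative_eq_intros dH DERIV_subset[OF deriv])
  then obtain c where "\<forall>u\<in>{t0..t}. y u * exp (- H u) = c"
    using has_field_derivative_zero_constant[of "{t0..t}"] by force
  then have "y t * exp (- H t) = y t0 * exp (- H t0)"
    using \<open>t0 \<le> t\<close> by auto
  then show ?thesis by (simp add: H_def exp_minus field_simps)
qed

section \<open>Forward solutions of globally Lipschitz ODEs\<close>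

lemma has_integral_shifted_power:
  fixes a b :: real
  assumes "a \<le> b"
  shows "((\<lambda>s. (s - a) ^ k) has_integral (b - a) ^ Suc k / Suc k) {a..b}"
proof -
  have "((\<lambda>s. (s - a) ^ Suc k) has_real_derivative Suc k * (s - a) ^ k) (at s within {a..b})" for s
    using DERIV_power[OF DERIV_diff[OF DERIV_ident DERIV_const], where n="Suc k"] by simp
  from DERIV_cdivide[OF this, of "Suc k"]
  have "((\<lambda>s. (s - a) ^ Suc k / Suc k) has_real_derivative (s - a) ^ k) (at s within {a..b})" for s
    by (simp del: of_nat_Suc)
  then show ?thesis
    using fundamental_theorem_of_calculus[OF assms, of "\<lambda>s. (s - a) ^ Suc k / Suc k"]
    by (simp add: has_real_derivative_iff_has_vector_derivative del: of_nat_Suc)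
qed

primrec picard_iter :: "('a::banach \<Rightarrow> 'a) \<Rightarrow> real \<Rightarrow> 'a \<Rightarrow> nat \<Rightarrow> real \<Rightarrow> 'a" where
  "picard_iter G t0 x0 0 = (\<lambda>t. x0)"
| "picard_iter G t0 x0 (Suc n) = (\<lambda>t. x0 + integral {t0..t} (\<lambda>s. G (picard_iter G t0 x0 n s)))"

lemma continuous_on_picard_iter:
  assumes "continuous_on UNIV G"
  shows "continuous_on {t0..T} (picard_iter G t0 x0 n)"
proof (induction n)
  case (Suc n)
  have "continuous_on {t0..T} (\<lambda>s. G (picard_iter G t0 x0 n s))"
    using continuous_on_compose2[OF assms Suc] by simp
  then show ?case
    by (auto intro!: continuous_intros indefinite_integral_continuous_1
        integrable_continuous_interval)
qed simp

lemma picard_iter_step_bound: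
  assumes lip: "L-lipschitz_on UNIV G" and "t0 \<le> t"
  shows "norm (picard_iter G t0 x0 (Suc n) t - picard_iter G t0 x0 n t)
           \<le> norm (G x0) * L ^ n * (t - t0) ^ Suc n / fact (Suc n)"
  using \<open>t0 \<le> t\<close>
proof (induction n arbitrary: t)
  case 0
  then show ?case by simp
next
  case (Suc n)
  let ?X = "picard_iter G t0 x0"
  let ?C = "L * (norm (G x0) * L ^ n / fact (Suc n))"
  have cont: "continuous_on UNIV G" by (rule lipschitz_on_continuous_on[OF lip])
  have int: "(\<lambda>s. G (?X m s)) integrable_on {t0..t}" for m
    by (intro integrable_continuous_interval
        continuous_on_compose2[OF cont continuous_on_picard_iter[OF cont]]) auto
  have "norm (?X (Suc (Suc n)) t - ?X (Suc n) t)
        = norm (integral {t0..t} (\<lambda>s. G (?X (Suc n) s) - G (?X n s)))"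
  proof -
    have "?X (Suc m) t = x0 + integral {t0..t} (\<lambda>s. G (?X m s))" for m by simp
    then show ?thesis
      by (simp only: Henstock_Kurzweil_Integration.integral_diff[OF int int] add_diff_cancel_left)
  qed
  also have "\<dots> \<le> integral {t0..t} (\<lambda>s. ?C * (s - t0) ^ Suc n)"
  proof (rule integral_norm_bound_integral)
    show "(\<lambda>s. G (?X (Suc n) s) - G (?X n s)) integrable_on {t0..t}"
      by (rule integrable_diff[OF int int])
    show "(\<lambda>s. ?C * (s - t0) ^ Suc n) integrable_on {t0..t}"
      using has_integral_mult_right[OF has_integral_shifted_power[OF Suc.prems]] by blast
  next
    fix s assume s: "s \<in> {t0..t}"
    have "norm (G (?X (Suc n) s) - G (?X n s)) \<le> L * norm (?X (Suc n) s - ?X n s)"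
      using lipschitz_on_normD[OF lip] by simp
    also have "\<dots> \<le> L * (norm (G x0) * L ^ n * (s - t0) ^ Suc n / fact (Suc n))"
      by (rule mult_left_mono) (use Suc.IH[of s] s lipschitz_on_nonneg[OF lip] in auto)
    also have "\<dots> = ?C * (s - t0) ^ Suc n" by simp
    finally show "norm (G (?X (Suc n) s) - G (?X n s)) \<le> ?C * (s - t0) ^ Suc n" .
  qed
  also have "\<dots> = ?C * ((t - t0) ^ Suc (Suc n) / Suc (Suc n))"
    using has_integral_mult_right[OF has_integral_shifted_power[OF Suc.prems]]
    by (rule integral_unique)
  also have "\<dots> = norm (G x0) * L ^ Suc n * (t - t0) ^ Suc (Suc n) / fact (Suc (Suc n))"
    by (simp add: field_simps)
  finally show ?case .
qed

lemma picard_iter_uniform_limit: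
  assumes lip: "L-lipschitz_on UNIV G"
  shows "\<exists>y. \<forall>T. uniform_limit {t0..T} (picard_iter G t0 x0) y sequentially"
proof -
  let ?X = "picard_iter G t0 x0"
  define y where "y t = x0 + (\<Sum>i. ?X (Suc i) t - ?X i t)" for t
  have "uniform_limit {t0..T} ?X y sequentially" for T
  proof -
    define M where "M i = norm (G x0) * (T - t0) * (inverse (fact i) * (L * (T - t0)) ^ i)" for i
    have L: "0 \<le> L" by (rule lipschitz_on_nonneg[OF lip])
    have "norm (?X (Suc i) t - ?X i t) \<le> M i" if "t \<in> {t0..T}" for i t
    proof -
      have "norm (?X (Suc i) t - ?X i t) \<le> norm (G x0) * L ^ i * (t - t0) ^ Suc i / fact (Suc i)"
        using picard_iter_step_bound[OF lip] that by auto
      also have "\<dots> \<le> norm (G x0) * L ^ i * (T - t0) ^ Suc i / fact i"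
        using that L by (intro frac_le mult_left_mono power_mono fact_mono) auto
      also have "\<dots> = M i"
        by (simp add: M_def power_mult_distrib divide_inverse mult_ac)
      finally show ?thesis .
    qed
    moreover have "summable M" unfolding M_def by (intro summable_mult summable_exp)
    ultimately have "uniform_limit {t0..T} (\<lambda>n t. \<Sum>i<n. ?X (Suc i) t - ?X i t)
                       (\<lambda>t. \<Sum>i. ?X (Suc i) t - ?X i t) sequentially"
      by (rule Weierstrass_m_test)
    moreover have "(\<Sum>i<n. ?X (Suc i) t - ?X i t) = ?X n t - x0" for n t
      using sum_lessThan_telescope[of "\<lambda>i. ?X i t" n] by simp
    ultimately show ?thesis
      unfolding y_def uniform_limit_iff dist_norm
      by (simp add: algebra_simps del: picard_iter.simps)
  qed
  then show ?thesis by blast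
qed

theorem lipschitz_ode_forward_solution:
  fixes G :: "'a::banach \<Rightarrow> 'a"
  assumes lip: "L-lipschitz_on UNIV G"
  shows "\<exists>y. y t0 = x0 \<and> (\<forall>t\<ge>t0. (y has_vector_derivative G (y t)) (at t within {t0..}))"
proof -
  let ?X = "picard_iter G t0 x0"
  obtain y where y: "\<And>T. uniform_limit {t0..T} ?X y sequentially"
    using picard_iter_uniform_limit[OF lip] by blast
  have cont: "continuous_on UNIV G" by (rule lipschitz_on_continuous_on[OF lip])
  have cont_y: "continuous_on {t0..T} y" for T
    by (rule uniform_limit_theorem[OF _ y]) (auto simp: continuous_on_picard_iter[OF cont])
  have fixpoint: "y t = x0 + integral {t0..t} (\<lambda>s. G (y s))" if "t0 \<le> t" for t
  proof -
    have "uniform_limit {t0..t} (\<lambda>n s. G (?X n s)) (G \<circ> y) sequentially"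
      by (rule uniform_limit_compose[OF y lipschitz_on_uniformly_continuous[OF lip]]) auto
    then obtain I J where I: "\<And>n. ((\<lambda>s. G (?X n s)) has_integral I n) {t0..t}"
      and J: "((G \<circ> y) has_integral J) {t0..t}" and IJ: "I \<longlonglongrightarrow> J"
      by (rule uniform_limit_integral)
        (auto intro: continuous_on_compose2[OF cont continuous_on_picard_iter[OF cont]])
    have "?X (Suc n) t = x0 + I n" for n
      using integral_unique[OF I] by simp
    then have "(\<lambda>n. ?X (Suc n) t) \<longlonglongrightarrow> x0 + J"
      using IJ by (simp add: tendsto_add)
    moreover have "(\<lambda>n. ?X n t) \<longlonglongrightarrow> y t"
      using tendsto_uniform_limitI[OF y[of t]] that by simp
    then have "(\<lambda>n. ?X (Suc n) t) \<longlonglongrightarrow> y t"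
      by (rule LIMSEQ_Suc)
    ultimately show ?thesis
      using J LIMSEQ_unique by (force simp: integral_unique comp_def)
  qed
  have "(y has_vector_derivative G (y t)) (at t within {t0..})" if "t0 \<le> t" for t
  proof -
    have "continuous_on {t0..t + 1} (\<lambda>s. G (y s))"
      by (rule continuous_on_compose2[OF cont cont_y]) auto
    then have "((\<lambda>u. x0 + integral {t0..u} (\<lambda>s. G (y s))) has_vector_derivative G (y t))
                 (at t within {t0..t + 1})"
      using that by (auto intro!: derivative_eq_intros integral_has_vector_derivative)
    then have "(y has_vector_derivative G (y t)) (at t within {t0..t + 1})"
      by (rule has_vector_derivative_transform[rotated 2]) (use that fixpoint in auto)
    moreover have "at t within {t0..t + 1} = at t within {t0..}"
      by (rule at_within_nhd[of _ "{..<t + 1}"]) auto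
    ultimately show ?thesis by simp
  qed
  with fixpoint[of t0] show ?thesis by auto
qed

section \<open>Existence of solutions and invariance of F\<close>

lemma lipschitz_on_mult_bounded:
  fixes f g :: "'a::metric_space \<Rightarrow> real"
  assumes f: "C-lipschitz_on U f" and g: "D-lipschitz_on U g"
    and bounds: "\<And>x. x \<in> U \<Longrightarrow> \<bar>f x\<bar> \<le> K" "\<And>x. x \<in> U \<Longrightarrow> \<bar>g x\<bar> \<le> K" and "0 \<le> K"
  shows "(K * C + K * D)-lipschitz_on U (\<lambda>x. f x * g x)"
proof (rule lipschitz_onI)
  fix x y assume xy: "x \<in> U" "y \<in> U"
  have "dist (f x * g x) (f y * g y) = \<bar>g x * (f x - f y) + f y * (g x - g y)\<bar>"
    by (simp add: dist_real_def algebra_simps)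
  also have "\<dots> \<le> \<bar>g x\<bar> * dist (f x) (f y) + \<bar>f y\<bar> * dist (g x) (g y)"
    unfolding dist_real_def abs_mult[symmetric] by (rule abs_triangle_ineq)
  also have "\<dots> \<le> K * (C * dist x y) + K * (D * dist x y)"
    using xy bounds lipschitz_onD[OF f xy] lipschitz_onD[OF g xy] \<open>0 \<le> K\<close>
    by (intro add_mono mult_mono) auto
  finally show "dist (f x * g x) (f y * g y) \<le> (K * C + K * D) * dist x y"
    by (simp add: algebra_simps)
qed (use lipschitz_on_nonneg[OF f] lipschitz_on_nonneg[OF g] \<open>0 \<le> K\<close> in auto)

lemma has_vector_derivative_Pair_components:
  assumes "(z has_vector_derivative (u, v)) F"
  shows "((\<lambda>t. fst (z t)) has_real_derivative u) F" "((\<lambda>t. snd (z t)) has_real_derivative v) F"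
  using has_derivative_fst[OF assms[unfolded has_vector_derivative_def]]
    has_derivative_snd[OF assms[unfolded has_vector_derivative_def]]
  by (auto simp: has_field_derivative_def mult.commute elim!: has_derivative_eq_rhs)

lemma clamp_unit_interval: "clamp 0 1 x = max 0 (min 1 (x::real))"
  unfolding clamp_def Basis_real_def by auto

lemma clamp_unit_interval_lipschitz: "1-lipschitz_on UNIV (clamp 0 1 :: real \<Rightarrow> real)"
  by (rule lipschitz_onI) (simp_all add: dist_clamps_le_dist_args)

lemma centrist_rate_eq:
  "- 2 * fP mu delta b P A - fA delta rho P A = 2 * P * (mu - b * (1 - 2 * P - A)) + rho * A"
  by (simp add: fP_def fA_def algebra_simps)

locale reduced_system =
  fixes mu delta rho b :: real
  assumes mu_pos: "0 < mu" and delta_pos: "0 < delta" and rho_pos: "0 < rho" and b_pos: "0 < b"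
begin

lemma rho_A_le_neg_fA:
  assumes "0 \<le> P" "0 \<le> A"
  shows "rho * A \<le> - fA delta rho P A"
  using assms delta_pos by (simp add: fA_def algebra_simps)

lemma centrist_rate_nonneg:
  assumes "0 \<le> P" "0 \<le> A" "1 - 2 * P - A \<le> 0"
  shows "0 \<le> - 2 * fP mu delta b P A - fA delta rho P A"
  using assms mu_pos b_pos rho_pos mult_left_mono[OF assms(3), of b]
  unfolding centrist_rate_eq by (intro add_nonneg_nonneg mult_nonneg_nonneg) auto

text \<open>Outside the feasible set the vector field is frozen at its value on the nearest point of
  the unit square; this makes it globally Lipschitz, and it agrees with the system on F.\<close>

definition clamped_field :: "real \<times> real \<Rightarrow> real \<times> real" where
  "clamped_field z = (fP mu delta b (clamp 0 1 (fst z)) (clamp 0 1 (snd z)),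
                      fA delta rho (clamp 0 1 (fst z)) (clamp 0 1 (snd z)))"

lemma clamped_field_lipschitz: "\<exists>L. L-lipschitz_on UNIV clamped_field"
proof -
  define cp ca where "cp z = clamp 0 1 (fst z)" and "ca z = clamp 0 1 (snd z)"
    for z :: "real \<times> real"
  have "1-lipschitz_on UNIV fst" "1-lipschitz_on UNIV snd"
    by (rule lipschitz_onI; simp add: dist_fst_le dist_snd_le)+
  then have cp: "1-lipschitz_on UNIV cp" and ca: "1-lipschitz_on UNIV ca"
    using lipschitz_on_compose2[OF _ lipschitz_on_subset[OF clamp_unit_interval_lipschitz]]
    unfolding cp_def ca_def by fastforce+
  have bounds: "\<bar>cp z\<bar> \<le> 1" "\<bar>ca z\<bar> \<le> 1" for z by (auto simp: cp_def ca_def clamp_unit_interval)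
  have pp: "(1 * 1 + 1 * 1)-lipschitz_on UNIV (\<lambda>z. cp z * cp z)"
    and pa: "(1 * 1 + 1 * 1)-lipschitz_on UNIV (\<lambda>z. cp z * ca z)"
    by (rule lipschitz_on_mult_bounded[OF cp cp] lipschitz_on_mult_bounded[OF cp ca];
        simp add: bounds)+
  have "clamped_field = (\<lambda>z. ((b - mu) * cp z - 2 * b * (cp z * cp z) + (delta - b) * (cp z * ca z),
                              (- 2 * delta) * (cp z * ca z) + (- rho) * ca z))"
    by (auto simp: fun_eq_iff clamped_field_def fP_def fA_def cp_def ca_def algebra_simps)
  then show ?thesis
    by (simp only:) (rule exI, (rule cp ca pp pa lipschitz_on_Pair lipschitz_on_add
        lipschitz_on_diff lipschitz_on_cmult_real)+)
qed

lemma clamped_flow_stays_in_F: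
  assumes dz: "\<And>t. t0 \<le> t \<Longrightarrow> (z has_vector_derivative clamped_field (z t)) (at t within {t0..})"
    and init: "in_F (fst (z t0)) (snd (z t0))" and "t0 \<le> t"
  shows "in_F (fst (z t)) (snd (z t))"
proof -
  define p a where "p t = fst (z t)" and "a t = snd (z t)" for t
  define gP gA where "gP t = fP mu delta b (clamp 0 1 (p t)) (clamp 0 1 (a t))"
    and "gA t = fA delta rho (clamp 0 1 (p t)) (clamp 0 1 (a t))" for t
  have dp: "(p has_real_derivative gP t) (at t within {t0..})"
    and da: "(a has_real_derivative gA t) (at t within {t0..})" if "t0 \<le> t" for t
    using has_vector_derivative_Pair_components[OF dz[OF that, unfolded clamped_field_def]]
    unfolding gP_def gA_def p_def a_def by simp_all
  have p_nonneg: "0 \<le> p t" if "t0 \<le> t" for t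
    by (rule nonneg_barrier[OF dp _ _ that])
      (use init in \<open>auto simp: p_def in_F_def gP_def fP_def clamp_unit_interval\<close>)
  have a_nonneg: "0 \<le> a t" if "t0 \<le> t" for t
    by (rule nonneg_barrier[OF da _ _ that])
      (use init in \<open>auto simp: a_def in_F_def gA_def fA_def clamp_unit_interval\<close>)
  have a_le_1: "0 \<le> 1 - a t" if "t0 \<le> t" for t
  proof (rule nonneg_barrier[OF _ _ _ that])
    show "((\<lambda>t. 1 - a t) has_real_derivative - gA t) (at t within {t0..})" if "t0 \<le> t" for t
      using da[OF that] by (auto intro!: derivative_eq_intros)
    have "0 \<le> rho * clamp 0 1 (a t)" for t
      using rho_pos by (simp add: clamp_unit_interval)
    then show "0 \<le> - gA t" for t
      unfolding gA_def by (rule order_trans[OF _ rho_A_le_neg_fA]) (auto simp: clamp_unit_interval)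
  qed (use init in \<open>auto simp: a_def in_F_def\<close>)
  have C_nonneg: "0 \<le> 1 - 2 * p t - a t" if "t0 \<le> t" for t
  proof (rule nonneg_barrier[OF _ _ _ that])
    show "((\<lambda>t. 1 - 2 * p t - a t) has_real_derivative - 2 * gP t - gA t) (at t within {t0..})"
      if "t0 \<le> t" for t
      using dp[OF that] da[OF that] by (auto intro!: derivative_eq_intros)
    fix t assume "t0 < t" "1 - 2 * p t - a t < 0"
    then have "1 - 2 * clamp 0 1 (p t) - clamp 0 1 (a t) \<le> 0"
      using p_nonneg[of t] a_nonneg[of t] a_le_1[of t] by (auto simp: clamp_unit_interval)
    then show "0 \<le> - 2 * gP t - gA t"
      unfolding gP_def gA_def by (intro centrist_rate_nonneg) (auto simp: clamp_unit_interval)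
  qed (use init in \<open>auto simp: p_def a_def in_F_def\<close>)
  show ?thesis
    using p_nonneg[OF \<open>t0 \<le> t\<close>] a_nonneg[OF \<open>t0 \<le> t\<close>] C_nonneg[OF \<open>t0 \<le> t\<close>]
    unfolding in_F_def p_def a_def by linarith
qed

lemma is_sol_exists:
  assumes "in_F P0 A0"
  shows "\<exists>p a. is_sol mu delta rho b t0 P0 A0 p a"
proof -
  obtain L where "L-lipschitz_on UNIV clamped_field"
    using clamped_field_lipschitz by blast
  then obtain z where z0: "z t0 = (P0, A0)"
    and dz: "\<And>t. t0 \<le> t \<Longrightarrow> (z has_vector_derivative clamped_field (z t)) (at t within {t0..})"
    using lipschitz_ode_forward_solution by blast
  have F: "in_F (fst (z t)) (snd (z t))" if "t0 \<le> t" for t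
    using clamped_flow_stays_in_F[OF dz _ that] z0 assms by simp
  have "clamped_field (z t) =
      (fP mu delta b (fst (z t)) (snd (z t)), fA delta rho (fst (z t)) (snd (z t)))"
    if "t0 \<le> t" for t
    using F[OF that] by (auto simp: clamped_field_def in_F_def clamp_unit_interval)
  with dz have "(z has_vector_derivative
      (fP mu delta b (fst (z t)) (snd (z t)), fA delta rho (fst (z t)) (snd (z t))))
      (at t within {t0..})"
    if "t0 \<le> t" for t
    using that by simp
  note components = has_vector_derivative_Pair_components[OF this]
  have "is_sol mu delta rho b t0 P0 A0 (\<lambda>t. fst (z t)) (\<lambda>t. snd (z t))"
    unfolding is_sol_def using components z0 by simp
  then show ?thesis by blast
qed

end

section \<open>Long-time behaviour of a solution\<close>

locale reduced_solution = reduced_system +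
  fixes t0 P0 A0 :: real and p a :: "real \<Rightarrow> real"
  assumes sol: "is_sol mu delta rho b t0 P0 A0 p a"
    and init_F: "in_F P0 A0" and P0_pos: "0 < P0"
begin

lemma
  assumes "t0 \<le> T" "T \<le> t"
  shows p_deriv: "(p has_real_derivative fP mu delta b (p t) (a t)) (at t within {T..})"
    and a_deriv: "(a has_real_derivative fA delta rho (p t) (a t)) (at t within {T..})"
proof -
  have sub: "{T..} \<subseteq> {t0..}" using assms(1) by auto
  have "(p has_real_derivative fP mu delta b (p t) (a t)) (at t within {t0..})"
    and "(a has_real_derivative fA delta rho (p t) (a t)) (at t within {t0..})"
    using sol assms unfolding is_sol_def by auto
  then show "(p has_real_derivative fP mu delta b (p t) (a t)) (at t within {T..})"
    and "(a has_real_derivative fA delta rho (p t) (a t)) (at t within {T..})"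
    using DERIV_subset sub by blast+
qed

lemma p_pos:
  assumes "t0 \<le> t"
  shows "0 < p t"
proof -
  define h where "h s = (b - mu) - 2 * b * p s + (delta - b) * a s" for s
  have "continuous_on {t0..} p" "continuous_on {t0..} a"
    by (rule DERIV_continuous_on, use p_deriv[OF order.refl] a_deriv[OF order.refl] in force)+
  then have "continuous_on {t0..} h"
    unfolding h_def by (intro continuous_intros)
  then have "p t = p t0 * exp (integral {t0..t} h)"
    using p_deriv[OF order.refl] assms
    by (intro linear_ode_solution) (auto simp: fP_def h_def mult.commute)
  then show ?thesis
    using sol P0_pos by (simp add: is_sol_def)
qed

lemma a_nonneg: "t0 \<le> t \<Longrightarrow> 0 \<le> a t"
proof (rule nonneg_barrier[OF a_deriv[OF order.refl]])
  fix s assume "t0 < s" "a s < 0"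
  then show "0 \<le> fA delta rho (p s) (a s)"
    using mult_pos_pos[OF delta_pos p_pos[of s]] rho_pos by (simp add: fA_def mult_nonpos_nonpos)
qed (use sol init_F in \<open>auto simp: is_sol_def in_F_def\<close>)

lemma C_nonneg: "t0 \<le> t \<Longrightarrow> 0 \<le> 1 - 2 * p t - a t"
proof (rule nonneg_barrier[where f = "\<lambda>t. 1 - 2 * p t - a t" and T = t0])
  show "((\<lambda>t. 1 - 2 * p t - a t) has_real_derivative
          - 2 * fP mu delta b (p s) (a s) - fA delta rho (p s) (a s)) (at s within {t0..})"
    if "t0 \<le> s" for s
    using p_deriv[OF order.refl that] a_deriv[OF order.refl that]
    by (auto intro!: derivative_eq_intros)
  show "0 \<le> - 2 * fP mu delta b (p s) (a s) - fA delta rho (p s) (a s)"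
    if "t0 < s" "1 - 2 * p s - a s < 0" for s
    using that p_pos[of s] a_nonneg[of s] by (intro centrist_rate_nonneg) auto
qed (use sol init_F in \<open>auto simp: is_sol_def in_F_def\<close>)

lemma a_tendsto_0: "(a \<longlongrightarrow> 0) at_top"
proof (rule order_tendstoI)
  show "\<forall>\<^sub>F t in at_top. y < a t" if "y < 0" for y
    using eventually_ge_at_top[of t0] by eventually_elim (use that a_nonneg in force)
next
  fix y :: real assume "0 < y"
  have "\<forall>\<^sub>F t in at_top. 0 \<le> y / 2 - a t"
  proof (rule eventually_nonneg_if_pushed_up[where T = t0 and r = "rho * (y / 2)"])
    show "((\<lambda>t. y / 2 - a t) has_real_derivative - fA delta rho (p t) (a t)) (at t within {t0..})"
      if "t0 \<le> t" for t
      using a_deriv[OF order.refl that] by (auto intro!: derivative_eq_intros)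
    show "\<forall>\<^sub>F t in at_top. y / 2 - a t < 0 \<longrightarrow> rho * (y / 2) \<le> - fA delta rho (p t) (a t)"
      using eventually_ge_at_top[of t0]
    proof eventually_elim
      case (elim t)
      then have "rho * (y / 2) \<le> rho * a t" if "y / 2 - a t < 0"
        using that rho_pos by simp
      then show ?case
        using rho_A_le_neg_fA[OF less_imp_le[OF p_pos] a_nonneg, OF elim elim] by linarith
    qed
  qed (use rho_pos \<open>0 < y\<close> in simp)
  then show "\<forall>\<^sub>F t in at_top. a t < y"
    by eventually_elim (use \<open>0 < y\<close> in simp)
qed

lemma ln_p_deriv:
  assumes "t0 \<le> T" "T \<le> t"
  shows "((\<lambda>t. ln (p t)) has_real_derivative (b - mu) - 2 * b * p t + (delta - b) * a t)
           (at t within {T..})"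
proof -
  have "0 < p t" using assms by (intro p_pos) simp
  have "((\<lambda>t. ln (p t)) has_real_derivative fP mu delta b (p t) (a t) / p t) (at t within {T..})"
    by (rule derivative_eq_intros p_deriv[OF assms] refl | use \<open>0 < p t\<close> in simp)+
  then show ?thesis
    using \<open>0 < p t\<close> by (simp add: fP_def)
qed

lemma eventually_A_coupling_small:
  assumes "0 < eta"
  shows "\<forall>\<^sub>F t in at_top. \<bar>(delta - b) * a t\<bar> < eta"
proof -
  have "((\<lambda>t. (delta - b) * a t) \<longlongrightarrow> 0) at_top"
    using tendsto_mult[OF tendsto_const a_tendsto_0] by simp
  then show ?thesis
    using assms by (auto simp: tendsto_iff dist_real_def)
qed

lemma eventually_p_le:
  assumes "0 < c" "b - mu < 2 * b * c"
  shows "\<forall>\<^sub>F t in at_top. p t \<le> c"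
proof -
  define eta where "eta = (2 * b * c - (b - mu)) / 2"
  have eta: "0 < eta" using assms by (simp add: eta_def)
  have "\<forall>\<^sub>F t in at_top. 0 \<le> ln c - ln (p t)"
  proof (rule eventually_nonneg_if_pushed_up[OF _ eta])
    show "((\<lambda>t. ln c - ln (p t)) has_real_derivative - ((b - mu) - 2 * b * p t + (delta - b) * a t))
            (at t within {t0..})" if "t0 \<le> t" for t
      using DERIV_diff[OF DERIV_const ln_p_deriv[OF order.refl that]] by simp
    show "\<forall>\<^sub>F t in at_top. ln c - ln (p t) < 0 \<longrightarrow>
            eta \<le> - ((b - mu) - 2 * b * p t + (delta - b) * a t)"
      using eventually_ge_at_top[of t0] eventually_A_coupling_small[OF eta]
    proof eventually_elim
      case (elim t)
      have "2 * b * c \<le> 2 * b * p t" if "ln c < ln (p t)"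
        using that p_pos[OF elim(1)] \<open>0 < c\<close> b_pos by simp
      then show ?case using elim by (auto simp: eta_def)
    qed
  qed
  then show ?thesis
    using eventually_ge_at_top[of t0] by eventually_elim (use p_pos \<open>0 < c\<close> in simp)
qed

lemma eventually_p_ge:
  assumes "0 < c" "2 * b * c < b - mu"
  shows "\<forall>\<^sub>F t in at_top. c \<le> p t"
proof -
  define eta where "eta = ((b - mu) - 2 * b * c) / 2"
  have eta: "0 < eta" using assms by (simp add: eta_def)
  have "\<forall>\<^sub>F t in at_top. 0 \<le> ln (p t) - ln c"
  proof (rule eventually_nonneg_if_pushed_up[OF _ eta])
    show "((\<lambda>t. ln (p t) - ln c) has_real_derivative (b - mu) - 2 * b * p t + (delta - b) * a t)
            (at t within {t0..})" if "t0 \<le> t" for t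
      using DERIV_diff[OF ln_p_deriv[OF order.refl that] DERIV_const] by simp
    show "\<forall>\<^sub>F t in at_top. ln (p t) - ln c < 0 \<longrightarrow>
            eta \<le> (b - mu) - 2 * b * p t + (delta - b) * a t"
      using eventually_ge_at_top[of t0] eventually_A_coupling_small[OF eta]
    proof eventually_elim
      case (elim t)
      have "2 * b * p t \<le> 2 * b * c" if "ln (p t) < ln c"
        using that p_pos[OF elim(1)] \<open>0 < c\<close> b_pos by simp
      then show ?case using elim by (auto simp: eta_def)
    qed
  qed
  then show ?thesis
    using eventually_ge_at_top[of t0] by eventually_elim (use p_pos \<open>0 < c\<close> in simp)
qed

lemma p_tendsto: "(p \<longlongrightarrow> max 0 ((b - mu) / (2 * b))) at_top"
proof (rule order_tendstoI)
  let ?P = "max 0 ((b - mu) / (2 * b))"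
  fix y assume lt_P: "y < ?P"
  show "\<forall>\<^sub>F t in at_top. y < p t"
  proof (cases "y < 0")
    case True
    show ?thesis
      using eventually_ge_at_top[of t0] by eventually_elim (use True p_pos in force)
  next
    case False
    with lt_P have "y < (b - mu) / (2 * b)" by simp
    then have "2 * b * y < b - mu"
      using b_pos by (simp add: field_simps)
    moreover have "2 * b * ((y + (b - mu) / (2 * b)) / 2) = (2 * b * y + (b - mu)) / 2"
      using b_pos by (simp add: field_simps)
    ultimately have "2 * b * ((y + (b - mu) / (2 * b)) / 2) < b - mu"
      by simp
    with False eventually_p_ge[of "(y + (b - mu) / (2 * b)) / 2"]
    have "\<forall>\<^sub>F t in at_top. (y + (b - mu) / (2 * b)) / 2 \<le> p t"
      using \<open>y < (b - mu) / (2 * b)\<close> by simp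
    then show ?thesis
      by eventually_elim (use \<open>y < (b - mu) / (2 * b)\<close> in simp)
  qed
next
  let ?P = "max 0 ((b - mu) / (2 * b))"
  fix y assume P_lt: "?P < y"
  have "b - mu = 2 * b * ((b - mu) / (2 * b))"
    using b_pos by simp
  also have "\<dots> \<le> 2 * b * ?P"
    using b_pos by (intro mult_left_mono) auto
  also have "\<dots> < 2 * b * ((?P + y) / 2)"
    using b_pos P_lt by simp
  finally have "b - mu < 2 * b * ((?P + y) / 2)" .
  with eventually_p_le[of "(?P + y) / 2"] P_lt
  have "\<forall>\<^sub>F t in at_top. p t \<le> (?P + y) / 2"
    by (simp add: add_nonneg_pos)
  moreover have "(?P + y) / 2 < y"
    using P_lt by simp
  ultimately show "\<forall>\<^sub>F t in at_top. p t < y"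
    by (auto elim: eventually_mono)
qed

lemma C_tendsto: "((\<lambda>t. 1 - 2 * p t - a t) \<longlongrightarrow> min 1 (mu / b)) at_top"
proof -
  have "1 - 2 * max 0 ((b - mu) / (2 * b)) - 0 = min 1 (mu / b)"
    using b_pos by (auto simp: field_simps max_def min_def)
  then show ?thesis
    using tendsto_diff[OF tendsto_diff[OF tendsto_const tendsto_mult[OF tendsto_const p_tendsto]]
        a_tendsto_0, of 1 2] by simp
qed

end

lemma (in reduced_system) Cinf_is_threshold:
  assumes "in_F P0 A0" "0 < P0"
  shows "Cinf_is mu delta rho b t0 P0 A0 (if b \<le> mu then 1 else mu / b)"
proof -
  have "min 1 (mu / b) = (if b \<le> mu then 1 else mu / b)"
    using b_pos by (simp add: min_def divide_le_eq_1)
  moreover have "((\<lambda>t. 1 - 2 * p t - a t) \<longlongrightarrow> min 1 (mu / b)) at_top"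
    if "is_sol mu delta rho b t0 P0 A0 p a" for p a
    using that assms by (intro reduced_solution.C_tendsto) unfold_locales
  ultimately show ?thesis
    unfolding Cinf_is_def using is_sol_exists[OF assms(1)] by simp
qed

section \<open>Shocks\<close>

lemma post_shock_in_F:
  assumes "in_F P A" "0 \<le> d" "d \<le> 1"
  shows "in_F P (A + d * (1 - 2 * P - A))"
proof -
  have "d * (1 - 2 * P - A) \<le> 1 - 2 * P - A" "0 \<le> d * (1 - 2 * P - A)"
    using assms by (auto simp: in_F_def intro: mult_left_le_one_le)
  then show ?thesis using assms by (simp add: in_F_def)
qed

lemma near_centrist_surge_criterion:
  fixes mu delta b A :: real
  assumes "b < delta"
  shows "\<exists>L. ((\<lambda>eps. fP mu delta b eps A / eps) \<longlongrightarrow> L) (at_right 0) \<and>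
             (0 < L \<longleftrightarrow> (mu - b) / (delta - b) < A)"
proof (intro exI conjI)
  have "((\<lambda>eps. (b - mu) - 2 * b * eps + (delta - b) * A) \<longlongrightarrow> (b - mu) - 2 * b * 0 + (delta - b) * A)
          (at_right 0)"
    by (intro tendsto_intros)
  moreover have "\<forall>\<^sub>F eps in at_right 0.
      (b - mu) - 2 * b * eps + (delta - b) * A = fP mu delta b eps A / eps"
    using eventually_at_right_less[of 0] by eventually_elim (simp add: fP_def)
  ultimately show "((\<lambda>eps. fP mu delta b eps A / eps) \<longlongrightarrow> (b - mu) + (delta - b) * A) (at_right 0)"
    by (simp add: Lim_transform_eventually)
  show "0 < (b - mu) + (delta - b) * A \<longleftrightarrow> (mu - b) / (delta - b) < A"
    using assms by (simp add: pos_divide_less_eq algebra_simps)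
qed

definition shock_param :: "real \<Rightarrow> (nat \<Rightarrow> real) \<Rightarrow> nat \<Rightarrow> real" where
  "shock_param beta0 dbeta k = beta0 + (\<Sum>j=1..k. dbeta j)"

lemma shock_param_mono:
  assumes "\<And>j. j \<in> {1..n} \<Longrightarrow> 0 \<le> dbeta j" "i \<le> k" "k \<le> n"
  shows "shock_param beta0 dbeta i \<le> shock_param beta0 dbeta k"
  unfolding shock_param_def using assms by (auto intro!: sum_mono2)

lemma shock_ratio_step:
  assumes "0 < mu" "mu < shock_param beta0 dbeta (k - 1)" "1 \<le> k" "0 \<le> dbeta k"
  defines "B \<equiv> shock_param beta0 dbeta"
  shows "mu / B k \<le> mu / B (k - 1)" and "mu / B k < mu / B (k - 1) \<longleftrightarrow> 0 < dbeta k"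
proof -
  have "B k = B (k - 1) + dbeta k"
    using \<open>1 \<le> k\<close> by (cases k) (auto simp: B_def shock_param_def)
  moreover have "0 < B (k - 1)" using assms by (simp add: B_def)
  ultimately show "mu / B k \<le> mu / B (k - 1)" and "mu / B k < mu / B (k - 1) \<longleftrightarrow> 0 < dbeta k"
    using assms(1,4) by (simp_all add: field_simps zero_less_mult_iff)
qed

lemma shock_param_first_crossing:
  assumes "beta0 < mu" "mu < shock_param beta0 dbeta ks"
    and below: "\<forall>j\<in>{1..<ks}. shock_param beta0 dbeta j \<le> mu"
  shows "ks = (LEAST k. (\<Sum>j=1..k. dbeta j) > mu - beta0)"
proof (rule Least_equality[symmetric])
  show "mu - beta0 < (\<Sum>j=1..ks. dbeta j)"
    using assms(2) by (simp add: shock_param_def)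
  show "ks \<le> k" if "mu - beta0 < (\<Sum>j = 1..k. dbeta j)" for k
  proof (rule ccontr)
    assume "\<not> ks \<le> k"
    then have "k = 0 \<or> k \<in> {1..<ks}" by auto
    then show False
      using that below[rule_format, of k] \<open>beta0 < mu\<close> by (auto simp: shock_param_def)
  qed
qed

theorem theorem7p12:
  fixes mu delta rho beta0 :: real
    and n :: nat
    and t :: "nat \<Rightarrow> real"
    and D dbeta :: "nat \<Rightarrow> real"
    and Pm Am :: "nat \<Rightarrow> real"
  assumes pos: "mu > 0" "delta > 0" "rho > 0"
    and beta0: "0 < beta0" "beta0 < mu"
    and times: "\<And>k. 1 \<le> k \<Longrightarrow> k < n \<Longrightarrow> t k < t (Suc k)"
    and D: "\<And>k. k \<in> {1..n} \<Longrightarrow> 0 \<le> D k \<and> D k \<le> 1"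
    and dbeta: "\<And>k. k \<in> {1..n} \<Longrightarrow> dbeta k \<ge> 0"
    and preF: "\<And>k. k \<in> {1..n} \<Longrightarrow> in_F (Pm k) (Am k)"
    and Ppos: "\<And>k. k \<in> {1..n} \<Longrightarrow> Pm k > 0"
  shows
    "let B = (\<lambda>k. beta0 + (\<Sum>j=1..k. dbeta j));
         Ap = (\<lambda>k. Am k + D k * (1 - 2 * Pm k - Am k))
     in
      (\<forall>k\<in>{1..n}. (\<forall>j\<in>{1..k}. B j \<le> mu) \<longrightarrow>
          Cinf_is mu delta rho (B k) (t k) (Pm k) (Ap k) 1 \<and>
          (delta > B k \<longrightarrow>
             (\<exists>L. ((\<lambda>eps. fP mu delta (B k) eps (D k) / eps) \<longlongrightarrow> L) (at_right 0) \<and>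
                  (L > 0 \<longleftrightarrow> D k > (mu - B k) / (delta - B k))))) \<and>
      (\<forall>ks. ks \<in> {1..n} \<and> B ks > mu \<and> (\<forall>j\<in>{1..<ks}. B j \<le> mu) \<longrightarrow>
          (Cinf_is mu delta rho (B ks) (t ks) (Pm ks) (Ap ks) (mu / B ks) \<and> mu / B ks < 1) \<and>
          (\<forall>k\<in>{1..n}. k > ks \<longrightarrow>
              Cinf_is mu delta rho (B k) (t k) (Pm k) (Ap k) (mu / B k) \<and>
              mu / B k \<le> mu / B (k - 1) \<and>
              (mu / B k < mu / B (k - 1) \<longleftrightarrow> dbeta k > 0)) \<and>
          ks = (LEAST k. (\<Sum>j=1..k. dbeta j) > mu - beta0))"
proof -
  define B where "B = shock_param beta0 dbeta"
  define Ap where "Ap k = Am k + D k * (1 - 2 * Pm k - Am k)" for k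
  have B_mono: "B i \<le> B k" if "i \<le> k" "k \<le> n" for i k
    unfolding B_def using shock_param_mono[OF dbeta that] by simp
  have B_pos: "0 < B k" if "k \<le> n" for k
    using B_mono[OF _ that, of 0] beta0 by (simp add: B_def shock_param_def)
  have Cinf: "Cinf_is mu delta rho (B k) (t k) (Pm k) (Ap k) (if B k \<le> mu then 1 else mu / B k)"
    if "k \<in> {1..n}" for k
    using reduced_system.Cinf_is_threshold[OF _ post_shock_in_F[OF preF] Ppos] D pos B_pos that
    by (auto simp: reduced_system_def Ap_def)
  have part_i: "\<forall>k\<in>{1..n}. (\<forall>j\<in>{1..k}. B j \<le> mu) \<longrightarrow>
      Cinf_is mu delta rho (B k) (t k) (Pm k) (Ap k) 1 \<and>
      (delta > B k \<longrightarrow> (\<exists>L. ((\<lambda>eps. fP mu delta (B k) eps (D k) / eps) \<longlongrightarrow> L) (at_right 0) \<and>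
                  (L > 0 \<longleftrightarrow> D k > (mu - B k) / (delta - B k))))"
  proof (intro ballI impI conjI)
    fix k assume "k \<in> {1..n}" and "\<forall>j\<in>{1..k}. B j \<le> mu"
    then show "Cinf_is mu delta rho (B k) (t k) (Pm k) (Ap k) 1"
      using Cinf[of k] by simp
  qed (rule near_centrist_surge_criterion)
  have part_ii_iv:
     "(Cinf_is mu delta rho (B ks) (t ks) (Pm ks) (Ap ks) (mu / B ks) \<and> mu / B ks < 1) \<and>
      (\<forall>k\<in>{1..n}. k > ks \<longrightarrow> Cinf_is mu delta rho (B k) (t k) (Pm k) (Ap k) (mu / B k) \<and>
           mu / B k \<le> mu / B (k - 1) \<and> (mu / B k < mu / B (k - 1) \<longleftrightarrow> dbeta k > 0)) \<and>
      ks = (LEAST k. (\<Sum>j=1..k. dbeta j) > mu - beta0)"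
    if ks: "ks \<in> {1..n}" "mu < B ks" and below: "\<forall>j\<in>{1..<ks}. B j \<le> mu" for ks
  proof -
    have above: "mu < B k" if "ks \<le> k" "k \<le> n" for k
      using B_mono[OF that] ks by simp
    have "Cinf_is mu delta rho (B k) (t k) (Pm k) (Ap k) (mu / B k)" if "k \<in> {1..n}" "ks \<le> k" for k
      using Cinf[OF that(1)] above[of k] that by simp
    moreover have "mu / B k \<le> mu / B (k - 1) \<and> (mu / B k < mu / B (k - 1) \<longleftrightarrow> 0 < dbeta k)"
      if "k \<in> {1..n}" "ks < k" for k
      using shock_ratio_step[of mu beta0 dbeta k] above[of "k - 1"] that dbeta[OF that(1)] pos
      by (simp add: B_def)
    moreover have "ks = (LEAST k. (\<Sum>j=1..k. dbeta j) > mu - beta0)"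
      using shock_param_first_crossing[OF beta0(2)] ks below by (simp add: B_def)
    ultimately show ?thesis
      using ks pos by auto
  qed
  show ?thesis
    using part_i part_ii_iv unfolding Let_def B_def Ap_def shock_param_def by blast
qed

end
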